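(* Let $\langle S,L,\tau,\ell\rangle$ be a labelled Markov chain. For all $s,t\in S$, the function $\delta_{\_}(s,t):(S\to\mathcal{D}(S))\to[0,1]$ is lower semi-continuous at $\tau$: for every sequence $(\tau_n)_n$ of transition functions converging to $\tau$, $\liminf_n\delta_{\tau_n}(s,t)\ge\delta_\tau(s,t)$.
   Context: A labelled Markov chain is a tuple $\langle S,L,\tau,\ell\rangle$ with $S$ a finite set of states, $L$ a finite set of labels, $\tau:S\to\mathcal{D}(S)$ a transition function ($\mathcal{D}(X)$ = probability distributions on $X$) and $\ell:S\to L$ a labelling. For $\mu,\nu\in\mathcal{D}(X)$, $\Omega(\mu,\nu)$ is the set of couplings: distributions $\omega$ on $X\times X$ with first marginal $\mu$ and second marginal $\nu$. Transition functions are equipped with the metric $d_F(\sigma,\tau)=\max_{s,x\in S}|\sigma(s)(x)-\tau(s)(x)|$. For any transition function $\sigma$, the bisimilarity distance $\delta_\sigma:S\times S\to[0,1]$ is the least fixed point of $\Delta_\sigma$, where $\Delta_\sigma(d)(s,t)=1$ if $\ell(s)\ne\ell(t)$ and $\Delta_\sigma(d)(s,t)=\inf_{\omega\in\Omega(\sigma(s),\sigma(t))}\sum_{u,v}\omega(u,v)d(u,v)$ otherwise. *)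

theory Defs
  imports "HOL-Probability.Probability_Mass_Function" "HOL-Library.Liminf_Limsup"
begin

definition couplings :: "'a pmf \<Rightarrow> 'a pmf \<Rightarrow> ('a \<times> 'a) pmf set" where
  "couplings \<mu> \<nu> = {\<omega>. map_pmf fst \<omega> = \<mu> \<and> map_pmf snd \<omega> = \<nu>}"

definition Delta :: "('a::finite \<Rightarrow> 'l) \<Rightarrow> ('a \<Rightarrow> 'a pmf) \<Rightarrow> ('a \<Rightarrow> 'a \<Rightarrow> real) \<Rightarrow> 'a \<Rightarrow> 'a \<Rightarrow> real" where
  "Delta lab \<sigma> d s t =
     (if lab s \<noteq> lab t then 1
      else Inf {(\<Sum>p\<in>UNIV. pmf \<omega> p * d (fst p) (snd p)) | \<omega>. \<omega> \<in> couplings (\<sigma> s) (\<sigma> t)})"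

text \<open>The bisimilarity distance: the least fixed point of \<open>Delta lab \<sigma>\<close> on the complete
  lattice of functions \<open>S \<times> S \<rightarrow> [0,1]\<close>, written (as in \<open>lfp_def\<close>) as the pointwise
  infimum of all pre-fixed points.\<close>
definition bisim_dist :: "('a::finite \<Rightarrow> 'l) \<Rightarrow> ('a \<Rightarrow> 'a pmf) \<Rightarrow> 'a \<Rightarrow> 'a \<Rightarrow> real" where
  "bisim_dist lab \<sigma> s t =
     Inf {d s t | d. (\<forall>u v. 0 \<le> d u v \<and> d u v \<le> 1) \<and> (\<forall>u v. Delta lab \<sigma> d u v \<le> d u v)}"

definition dF :: "('a::finite \<Rightarrow> 'a pmf) \<Rightarrow> ('a \<Rightarrow> 'a pmf) \<Rightarrow> real" where
  "dF \<sigma> \<tau> = Max {\<bar>pmf (\<sigma> s) x - pmf (\<tau> s) x\<bar> | s x. True}"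

end

(* The pointwise liminf D of the distances bisim_dist lab (\<tau>s n) is a pre-fixed point of
   Delta lab \<tau>, hence it dominates the least fixed point bisim_dist lab \<tau>.  Two estimates on
   Delta give this: it is nonexpansive in the distance, and for [0,1]-valued distances it is
   Lipschitz in the transition function, since every coupling of \<sigma> u and \<sigma> v can be turned
   into a coupling of \<tau> u and \<tau> v at an extra cost of at most the l1 distances between the
   marginals.  Thus eventually Delta lab \<tau> D \<le> Delta lab (\<tau>s n) (bisim_dist lab (\<tau>s n)) + e
   \<le> bisim_dist lab (\<tau>s n) + e, and passing to the liminf gives Delta lab \<tau> D \<le> D. *)

theory Submission
  imports Defs
begin

definition coupling_cost :: "('a::finite \<times> 'a) pmf \<Rightarrow> ('a \<Rightarrow> 'a \<Rightarrow> real) \<Rightarrow> real" where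
  "coupling_cost \<omega> d = (\<Sum>p\<in>UNIV. pmf \<omega> p * d (fst p) (snd p))"

lemma sum_UNIV_prod:
  fixes f :: "'a::finite \<times> 'b::finite \<Rightarrow> 'c::comm_monoid_add"
  shows "(\<Sum>p\<in>UNIV. f p) = (\<Sum>x\<in>UNIV. \<Sum>y\<in>UNIV. f (x, y))"
  by (simp add: sum.cartesian_product' flip: UNIV_Times_UNIV)

lemma sum_pmf_UNIV: "(\<Sum>x\<in>UNIV. pmf p x) = (1::real)" for p :: "'a::finite pmf"
  by (rule sum_pmf_eq_1) auto

lemma pmf_map_fst_eq_sum:
  fixes \<omega> :: "('a \<times> 'b::finite) pmf"
  shows "pmf (map_pmf fst \<omega>) x = (\<Sum>y\<in>UNIV. pmf \<omega> (x, y))"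
proof -
  have "pmf (map_pmf fst \<omega>) x = measure \<omega> ({x} \<times> UNIV)"
    by (simp add: pmf_map vimage_fst)
  also have "\<dots> = (\<Sum>y\<in>UNIV. pmf \<omega> (x, y))"
    by (simp add: measure_measure_pmf_finite sum.cartesian_product')
  finally show ?thesis .
qed

lemma pmf_map_snd_eq_sum:
  fixes \<omega> :: "('a::finite \<times> 'b) pmf"
  shows "pmf (map_pmf snd \<omega>) y = (\<Sum>x\<in>UNIV. pmf \<omega> (x, y))"
proof -
  have "pmf (map_pmf snd \<omega>) y = measure \<omega> (UNIV \<times> {y})"
    by (simp add: pmf_map vimage_snd)
  also have "\<dots> = (\<Sum>x\<in>UNIV. pmf \<omega> (x, y))"
    by (simp add: measure_measure_pmf_finite sum.cartesian_product')
  finally show ?thesis .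
qed

lemma couplings_iff_sums:
  fixes \<omega> :: "('a::finite \<times> 'a) pmf"
  shows "\<omega> \<in> couplings \<mu> \<nu> \<longleftrightarrow>
    (\<forall>x. (\<Sum>y\<in>UNIV. pmf \<omega> (x, y)) = pmf \<mu> x) \<and> (\<forall>y. (\<Sum>x\<in>UNIV. pmf \<omega> (x, y)) = pmf \<nu> y)"
  by (auto simp: couplings_def pmf_eq_iff pmf_map_fst_eq_sum pmf_map_snd_eq_sum)

lemma sum_pmf_coupling_fst:
  fixes \<omega> :: "('a::finite \<times> 'a) pmf"
  assumes "\<omega> \<in> couplings \<mu> \<nu>"
  shows "(\<Sum>p\<in>UNIV. pmf \<omega> p * f (fst p)) = (\<Sum>x\<in>UNIV. pmf \<mu> x * f x)"
proof -
  have "(\<Sum>p\<in>UNIV. pmf \<omega> p * f (fst p)) = (\<Sum>x\<in>UNIV. (\<Sum>y\<in>UNIV. pmf \<omega> (x, y)) * f x)"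
    by (simp add: sum_UNIV_prod sum_distrib_right)
  then show ?thesis
    using assms by (simp add: couplings_iff_sums)
qed

lemma sum_pmf_coupling_snd:
  fixes \<omega> :: "('a::finite \<times> 'a) pmf"
  assumes "\<omega> \<in> couplings \<mu> \<nu>"
  shows "(\<Sum>p\<in>UNIV. pmf \<omega> p * f (snd p)) = (\<Sum>y\<in>UNIV. pmf \<nu> y * f y)"
proof -
  have "(\<Sum>p\<in>UNIV. pmf \<omega> p * f (snd p)) = (\<Sum>x\<in>UNIV. \<Sum>y\<in>UNIV. pmf \<omega> (x, y) * f y)"
    by (simp add: sum_UNIV_prod)
  also have "\<dots> = (\<Sum>y\<in>UNIV. (\<Sum>x\<in>UNIV. pmf \<omega> (x, y)) * f y)"
    by (subst sum.swap) (simp add: sum_distrib_right)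
  finally show ?thesis
    using assms by (simp add: couplings_iff_sums)
qed

lemma pair_pmf_in_couplings: "pair_pmf \<mu> \<nu> \<in> couplings \<mu> \<nu>"
  by (simp add: couplings_def map_fst_pair_pmf map_snd_pair_pmf)

lemma exists_coupling_of_marginal_sums:
  fixes w :: "'a::finite \<times> 'a \<Rightarrow> real"
  assumes nonneg: "\<And>p. 0 \<le> w p"
    and fst: "\<And>x. (\<Sum>y\<in>UNIV. w (x, y)) = pmf \<mu> x"
    and snd: "\<And>y. (\<Sum>x\<in>UNIV. w (x, y)) = pmf \<nu> y"
  shows "\<exists>\<omega>\<in>couplings \<mu> \<nu>. pmf \<omega> = w"
proof
  have "(\<Sum>p\<in>UNIV. w p) = 1"
    by (simp add: sum_UNIV_prod fst sum_pmf_UNIV)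
  then show pmf_w: "pmf (embed_pmf w) = w"
    by (intro ext pmf_embed_pmf) (simp_all add: nonneg nn_integral_count_space_finite)
  show "embed_pmf w \<in> couplings \<mu> \<nu>"
    by (simp add: couplings_iff_sums pmf_w fst snd)
qed

lemma sum_product_divide_marginals:
  fixes r1 r2 :: "'a::finite \<Rightarrow> real"
  assumes "\<And>x. 0 \<le> r1 x" "\<And>y. 0 \<le> r2 y"
    and sum_r1: "(\<Sum>x\<in>UNIV. r1 x) = R" and sum_r2: "(\<Sum>y\<in>UNIV. r2 y) = R"
  shows "(\<Sum>y\<in>UNIV. r1 x * r2 y / R) = r1 x" and "(\<Sum>x\<in>UNIV. r1 x * r2 y / R) = r2 y"
proof -
  \<comment> \<open>For \<open>R = 0\<close> both functions vanish, so the junk division by zero does no harm.\<close>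
  have "r1 x = 0 \<and> r2 y = 0" if "R = 0"
    using that assms by (simp add: sum_nonneg_eq_0_iff)
  then show "(\<Sum>y\<in>UNIV. r1 x * r2 y / R) = r1 x" "(\<Sum>x\<in>UNIV. r1 x * r2 y / R) = r2 y"
    by (cases "R = 0";
        simp add: sum_divide_distrib[symmetric] sum_distrib_left[symmetric] sum_distrib_right[symmetric] sum_r1 sum_r2)+
qed

text \<open>The product of the two marginal deficits, rescaled by the missing mass, completes \<open>w\<close>
  to a coupling.\<close>
lemma subcoupling_completion:
  fixes w :: "'a::finite \<times> 'a \<Rightarrow> real" and d :: "'a \<Rightarrow> 'a \<Rightarrow> real"
  assumes nonneg: "\<And>p. 0 \<le> w p"
    and fst_le: "\<And>x. (\<Sum>y\<in>UNIV. w (x, y)) \<le> pmf \<mu> x"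
    and snd_le: "\<And>y. (\<Sum>x\<in>UNIV. w (x, y)) \<le> pmf \<nu> y"
    and d: "\<And>x y. 0 \<le> d x y" "\<And>x y. d x y \<le> 1"
  shows "\<exists>\<omega>\<in>couplings \<mu> \<nu>.
    coupling_cost \<omega> d \<le> (\<Sum>p\<in>UNIV. w p * d (fst p) (snd p)) + (1 - (\<Sum>p\<in>UNIV. w p))"
proof -
  define r1 where "r1 x = pmf \<mu> x - (\<Sum>y\<in>UNIV. w (x, y))" for x
  define r2 where "r2 y = pmf \<nu> y - (\<Sum>x\<in>UNIV. w (x, y))" for y
  define R where "R = 1 - (\<Sum>p\<in>UNIV. w p)"
  define w' where "w' p = w p + r1 (fst p) * r2 (snd p) / R" for p
  have r1_nonneg: "0 \<le> r1 x" and r2_nonneg: "0 \<le> r2 y" for x y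
    using fst_le[of x] snd_le[of y] by (simp_all add: r1_def r2_def)
  have sum_r1: "(\<Sum>x\<in>UNIV. r1 x) = R"
    by (simp add: r1_def R_def sum_subtractf sum_pmf_UNIV sum_UNIV_prod)
  have sum_r2: "(\<Sum>y\<in>UNIV. r2 y) = R"
    using sum.swap[of "\<lambda>x y. w (x, y)" UNIV UNIV]
    by (simp add: r2_def R_def sum_subtractf sum_pmf_UNIV sum_UNIV_prod)
  have R_nonneg: "0 \<le> R"
    using sum_r1 r1_nonneg by (metis sum_nonneg)
  note product_marginals = sum_product_divide_marginals[OF r1_nonneg r2_nonneg sum_r1 sum_r2]
  have "(\<Sum>y\<in>UNIV. w (x, y)) + r1 x = pmf \<mu> x" and "(\<Sum>x\<in>UNIV. w (x, y)) + r2 y = pmf \<nu> y" for x y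
    by (simp_all add: r1_def r2_def)
  then have "\<exists>\<omega>\<in>couplings \<mu> \<nu>. pmf \<omega> = w'"
    by (intro exists_coupling_of_marginal_sums)
      (simp_all add: w'_def sum.distrib product_marginals nonneg r1_nonneg r2_nonneg R_nonneg)
  then obtain \<omega> where \<omega>: "\<omega> \<in> couplings \<mu> \<nu>" and pmf_\<omega>: "pmf \<omega> = w'" by blast
  have "coupling_cost \<omega> d
      = (\<Sum>p\<in>UNIV. w p * d (fst p) (snd p)) + (\<Sum>p\<in>UNIV. r1 (fst p) * r2 (snd p) / R * d (fst p) (snd p))"
    by (simp add: coupling_cost_def pmf_\<omega> w'_def sum.distrib distrib_right)
  also have "\<dots> \<le> (\<Sum>p\<in>UNIV. w p * d (fst p) (snd p)) + (\<Sum>p\<in>UNIV. r1 (fst p) * r2 (snd p) / R)"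
    by (intro add_left_mono sum_mono mult_left_le) (simp_all add: d r1_nonneg r2_nonneg R_nonneg)
  also have "(\<Sum>p\<in>UNIV. r1 (fst p) * r2 (snd p) / R) = R"
    by (simp add: sum_UNIV_prod product_marginals sum_r1)
  finally show ?thesis
    using \<omega> by (auto simp: R_def)
qed

lemma mult_min_one_divide:
  fixes p q :: real
  assumes "0 \<le> p" "0 \<le> q"
  shows "p * min 1 (q / p) = min p q"
  using assms by (cases "p = 0") (auto simp: min_def field_simps)

lemma sum_scaled_coupling_fst:
  fixes \<omega> :: "('a::finite \<times> 'a) pmf"
  assumes "\<omega> \<in> couplings \<mu> \<nu>" "0 \<le> a x" "\<And>y. 0 \<le> b y" "\<And>y. b y \<le> 1"
  shows "(\<Sum>y\<in>UNIV. pmf \<omega> (x, y) * a x * b y) \<le> pmf \<mu> x * a x"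
proof -
  have "(\<Sum>y\<in>UNIV. pmf \<omega> (x, y) * a x * b y) \<le> (\<Sum>y\<in>UNIV. pmf \<omega> (x, y) * a x)"
    using assms(2-4) by (intro sum_mono mult_left_le) simp_all
  also have "\<dots> = pmf \<mu> x * a x"
    using assms(1) by (simp add: sum_distrib_right[symmetric] couplings_iff_sums)
  finally show ?thesis .
qed

lemma sum_scaled_coupling_snd:
  fixes \<omega> :: "('a::finite \<times> 'a) pmf"
  assumes "\<omega> \<in> couplings \<mu> \<nu>" "0 \<le> b y" "\<And>x. 0 \<le> a x" "\<And>x. a x \<le> 1"
  shows "(\<Sum>x\<in>UNIV. pmf \<omega> (x, y) * a x * b y) \<le> pmf \<nu> y * b y"
proof -
  have "(\<Sum>x\<in>UNIV. pmf \<omega> (x, y) * a x * b y) \<le> (\<Sum>x\<in>UNIV. pmf \<omega> (x, y) * b y)"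
    unfolding mult.assoc using assms(2-4) by (intro sum_mono mult_left_mono) (simp_all add: mult_left_le_one_le)
  also have "\<dots> = pmf \<nu> y * b y"
    using assms(1) by (simp add: sum_distrib_right[symmetric] couplings_iff_sums)
  finally show ?thesis .
qed

lemma scaled_coupling_mass_loss:
  fixes \<omega> :: "('a::finite \<times> 'a) pmf"
  assumes \<omega>: "\<omega> \<in> couplings \<mu> \<nu>"
    and a: "\<And>x. 0 \<le> a x" "\<And>x. a x \<le> 1" and b: "\<And>y. 0 \<le> b y" "\<And>y. b y \<le> 1"
  shows "1 - (\<Sum>p\<in>UNIV. pmf \<omega> p * a (fst p) * b (snd p))
    \<le> (\<Sum>x\<in>UNIV. pmf \<mu> x * (1 - a x)) + (\<Sum>y\<in>UNIV. pmf \<nu> y * (1 - b y))"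
proof -
  have "1 - (\<Sum>p\<in>UNIV. pmf \<omega> p * a (fst p) * b (snd p))
      = (\<Sum>p\<in>UNIV. pmf \<omega> p * (1 - a (fst p) * b (snd p)))"
    by (simp add: right_diff_distrib sum_subtractf sum_pmf_UNIV mult.assoc)
  also have "\<dots> \<le> (\<Sum>p\<in>UNIV. pmf \<omega> p * (1 - a (fst p)) + pmf \<omega> p * (1 - b (snd p)))"
  proof (intro sum_mono)
    fix p :: "'a \<times> 'a"
    have "0 \<le> (1 - a (fst p)) * (1 - b (snd p))"
      using a b by simp
    then have "1 - a (fst p) * b (snd p) \<le> (1 - a (fst p)) + (1 - b (snd p))"
      by (simp add: algebra_simps)
    then show "pmf \<omega> p * (1 - a (fst p) * b (snd p)) \<le> pmf \<omega> p * (1 - a (fst p)) + pmf \<omega> p * (1 - b (snd p))"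
      by (simp add: distrib_left[symmetric] mult_left_mono)
  qed
  also have "\<dots> = (\<Sum>x\<in>UNIV. pmf \<mu> x * (1 - a x)) + (\<Sum>y\<in>UNIV. pmf \<nu> y * (1 - b y))"
    by (simp only: sum.distrib sum_pmf_coupling_fst[OF \<omega>, where f = "\<lambda>x. 1 - a x"]
      sum_pmf_coupling_snd[OF \<omega>, where f = "\<lambda>y. 1 - b y"])
  finally show ?thesis .
qed

text \<open>Scale \<open>\<omega>\<close> down by \<open>min 1 (\<mu>'/\<mu>)\<close> in the first and \<open>min 1 (\<nu>'/\<nu>)\<close> in the second
  coordinate, then complete.\<close>
lemma coupling_cost_perturb_marginals:
  fixes \<mu> \<nu> \<mu>' \<nu>' :: "'a::finite pmf" and d :: "'a \<Rightarrow> 'a \<Rightarrow> real"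
  assumes \<omega>: "\<omega> \<in> couplings \<mu> \<nu>"
    and d: "\<And>x y. 0 \<le> d x y" "\<And>x y. d x y \<le> 1"
  shows "\<exists>\<omega>'\<in>couplings \<mu>' \<nu>'. coupling_cost \<omega>' d
    \<le> coupling_cost \<omega> d + (\<Sum>x\<in>UNIV. \<bar>pmf \<mu> x - pmf \<mu>' x\<bar>) + (\<Sum>y\<in>UNIV. \<bar>pmf \<nu> y - pmf \<nu>' y\<bar>)"
proof -
  define a where "a x = min 1 (pmf \<mu>' x / pmf \<mu> x)" for x
  define b where "b y = min 1 (pmf \<nu>' y / pmf \<nu> y)" for y
  define w where "w p = pmf \<omega> p * a (fst p) * b (snd p)" for p
  have a: "0 \<le> a x" "a x \<le> 1" and b: "0 \<le> b y" "b y \<le> 1" for x y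
    by (simp_all add: a_def b_def)
  have \<mu>_a: "pmf \<mu> x * a x = min (pmf \<mu> x) (pmf \<mu>' x)" and \<nu>_b: "pmf \<nu> y * b y = min (pmf \<nu> y) (pmf \<nu>' y)" for x y
    by (simp_all add: a_def b_def mult_min_one_divide)
  have "\<exists>\<omega>'\<in>couplings \<mu>' \<nu>'.
      coupling_cost \<omega>' d \<le> (\<Sum>p\<in>UNIV. w p * d (fst p) (snd p)) + (1 - (\<Sum>p\<in>UNIV. w p))"
  proof (rule subcoupling_completion[OF _ _ _ d])
    show "0 \<le> w p" for p
      by (simp add: w_def a b)
    show "(\<Sum>y\<in>UNIV. w (x, y)) \<le> pmf \<mu>' x" for x
      using sum_scaled_coupling_fst[OF \<omega>, of a x b] by (simp add: w_def a b \<mu>_a)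
    show "(\<Sum>x\<in>UNIV. w (x, y)) \<le> pmf \<nu>' y" for y
      using sum_scaled_coupling_snd[OF \<omega>, of b y a] by (simp add: w_def a b \<nu>_b)
  qed
  then obtain \<omega>' where \<omega>': "\<omega>' \<in> couplings \<mu>' \<nu>'"
    and cost_\<omega>': "coupling_cost \<omega>' d \<le> (\<Sum>p\<in>UNIV. w p * d (fst p) (snd p)) + (1 - (\<Sum>p\<in>UNIV. w p))"
    by blast
  have "w p \<le> pmf \<omega> p" for p
    unfolding w_def mult.assoc by (intro mult_left_le) (simp_all add: a b mult_le_one)
  then have cost_w: "(\<Sum>p\<in>UNIV. w p * d (fst p) (snd p)) \<le> coupling_cost \<omega> d"
    unfolding coupling_cost_def by (intro sum_mono mult_right_mono) (simp_all add: d)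
  have "1 - (\<Sum>p\<in>UNIV. w p) \<le> (\<Sum>x\<in>UNIV. pmf \<mu> x * (1 - a x)) + (\<Sum>y\<in>UNIV. pmf \<nu> y * (1 - b y))"
    unfolding w_def by (rule scaled_coupling_mass_loss[OF \<omega>]) (simp_all add: a b)
  also have "\<dots> \<le> (\<Sum>x\<in>UNIV. \<bar>pmf \<mu> x - pmf \<mu>' x\<bar>) + (\<Sum>y\<in>UNIV. \<bar>pmf \<nu> y - pmf \<nu>' y\<bar>)"
    by (intro add_mono sum_mono) (simp_all add: right_diff_distrib \<mu>_a \<nu>_b)
  finally show ?thesis
    using cost_\<omega>' cost_w by (intro bexI[OF _ \<omega>']) linarith
qed

lemma coupling_cost_const: "coupling_cost \<omega> (\<lambda>_ _. c) = c"
  by (simp add: coupling_cost_def sum_distrib_right[symmetric] sum_pmf_UNIV)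

lemma coupling_cost_le_plus:
  assumes "\<And>x y. d x y \<le> d' x y + e"
  shows "coupling_cost \<omega> d \<le> coupling_cost \<omega> d' + e"
proof -
  have "coupling_cost \<omega> d \<le> coupling_cost \<omega> (\<lambda>x y. d' x y + e)"
    unfolding coupling_cost_def by (intro sum_mono mult_left_mono assms) simp
  also have "\<dots> = coupling_cost \<omega> d' + e"
    by (simp add: coupling_cost_def distrib_left sum.distrib coupling_cost_const[unfolded coupling_cost_def])
  finally show ?thesis .
qed

lemma Delta_same_label:
  "lab u = lab v \<Longrightarrow> Delta lab \<sigma> d u v = Inf {coupling_cost \<omega> d | \<omega>. \<omega> \<in> couplings (\<sigma> u) (\<sigma> v)}"
  by (simp add: Delta_def coupling_cost_def)

lemma Delta_le_coupling_cost:
  fixes lab :: "'a::finite \<Rightarrow> 'l"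
  assumes "lab u = lab v" "\<omega> \<in> couplings (\<sigma> u) (\<sigma> v)"
  shows "Delta lab \<sigma> d u v \<le> coupling_cost \<omega> d"
proof -
  define m where "m = Min (range (\<lambda>p. d (fst p) (snd p)))"
  have "m \<le> d x y" for x y
    unfolding m_def by (rule Min_le) (auto intro: image_eqI[of _ _ "(x, y)"])
  then have "m \<le> coupling_cost \<omega>' d" for \<omega>' :: "('a \<times> 'a) pmf"
    using coupling_cost_le_plus[where d = "\<lambda>_ _. m" and d' = d and e = 0 and \<omega> = \<omega>']
    by (simp add: coupling_cost_const)
  then have "bdd_below {coupling_cost \<omega>' d | \<omega>'. \<omega>' \<in> couplings (\<sigma> u) (\<sigma> v)}"
    by (intro bdd_belowI[where m = m]) blast
  then show ?thesis
    using assms by (auto simp: Delta_same_label intro!: cInf_lower)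
qed

lemma Delta_greatest:
  assumes "lab u = lab v" "\<And>\<omega>. \<omega> \<in> couplings (\<sigma> u) (\<sigma> v) \<Longrightarrow> c \<le> coupling_cost \<omega> d"
  shows "c \<le> Delta lab \<sigma> d u v"
  using assms pair_pmf_in_couplings[of "\<sigma> u" "\<sigma> v"]
  by (auto simp: Delta_same_label intro!: cInf_greatest)

lemma Delta_le_plus:
  assumes "\<And>x y. d x y \<le> d' x y + e" "0 \<le> e"
  shows "Delta lab \<sigma> d u v \<le> Delta lab \<sigma> d' u v + e"
proof (cases "lab u = lab v")
  case True
  have "Delta lab \<sigma> d u v - e \<le> Delta lab \<sigma> d' u v"
  proof (rule Delta_greatest[OF True])
    fix \<omega> assume "\<omega> \<in> couplings (\<sigma> u) (\<sigma> v)"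
    then have "Delta lab \<sigma> d u v \<le> coupling_cost \<omega> d"
      by (rule Delta_le_coupling_cost[OF True])
    moreover have "coupling_cost \<omega> d \<le> coupling_cost \<omega> d' + e"
      by (rule coupling_cost_le_plus) (rule assms(1))
    ultimately show "Delta lab \<sigma> d u v - e \<le> coupling_cost \<omega> d'"
      by linarith
  qed
  then show ?thesis by simp
qed (simp add: Delta_def assms)

lemma abs_pmf_diff_le_dF: "\<bar>pmf (\<sigma> s) x - pmf (\<tau> s) x\<bar> \<le> dF \<sigma> \<tau>"
  for \<sigma> \<tau> :: "'a::finite \<Rightarrow> 'a pmf"
proof -
  have "{\<bar>pmf (\<sigma> s) x - pmf (\<tau> s) x\<bar> | s x. True} = range (\<lambda>(s, x). \<bar>pmf (\<sigma> s) x - pmf (\<tau> s) x\<bar>)"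
    by auto
  then have "finite {\<bar>pmf (\<sigma> s) x - pmf (\<tau> s) x\<bar> | s x. True}"
    by simp
  then show ?thesis
    unfolding dF_def by (rule Max_ge) blast
qed

lemma sum_abs_pmf_diff_le_dF:
  "(\<Sum>x\<in>UNIV. \<bar>pmf (\<sigma> s) x - pmf (\<tau> s) x\<bar>) \<le> real CARD('a) * dF \<sigma> \<tau>"
  for \<sigma> \<tau> :: "'a::finite \<Rightarrow> 'a pmf"
  using sum_bounded_above[of UNIV "\<lambda>x. \<bar>pmf (\<sigma> s) x - pmf (\<tau> s) x\<bar>" "dF \<sigma> \<tau>"]
  by (simp add: abs_pmf_diff_le_dF)

lemma Delta_le_Delta_plus_dF:
  fixes lab :: "'a::finite \<Rightarrow> 'l" and \<sigma> \<tau> :: "'a \<Rightarrow> 'a pmf"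
  assumes d: "\<And>x y. 0 \<le> d x y" "\<And>x y. d x y \<le> 1"
  shows "Delta lab \<tau> d u v \<le> Delta lab \<sigma> d u v + 2 * real CARD('a) * dF \<sigma> \<tau>"
proof (cases "lab u = lab v")
  case True
  have "Delta lab \<tau> d u v - 2 * real CARD('a) * dF \<sigma> \<tau> \<le> Delta lab \<sigma> d u v"
  proof (rule Delta_greatest[OF True])
    fix \<omega> assume "\<omega> \<in> couplings (\<sigma> u) (\<sigma> v)"
    from coupling_cost_perturb_marginals[where d = d and \<mu>' = "\<tau> u" and \<nu>' = "\<tau> v", OF this d] obtain \<omega>'
      where "\<omega>' \<in> couplings (\<tau> u) (\<tau> v)"
        and cost_\<omega>': "coupling_cost \<omega>' d \<le> coupling_cost \<omega> d
          + (\<Sum>x\<in>UNIV. \<bar>pmf (\<sigma> u) x - pmf (\<tau> u) x\<bar>) + (\<Sum>y\<in>UNIV. \<bar>pmf (\<sigma> v) y - pmf (\<tau> v) y\<bar>)"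
      by blast
    then have "Delta lab \<tau> d u v \<le> coupling_cost \<omega>' d"
      by (intro Delta_le_coupling_cost[OF True])
    then show "Delta lab \<tau> d u v - 2 * real CARD('a) * dF \<sigma> \<tau> \<le> coupling_cost \<omega> d"
      using cost_\<omega>' sum_abs_pmf_diff_le_dF[of \<sigma> u \<tau>] sum_abs_pmf_diff_le_dF[of \<sigma> v \<tau>] by linarith
  qed
  then show ?thesis by simp
next
  case False
  have "0 \<le> dF \<sigma> \<tau>"
    using abs_pmf_diff_le_dF[of \<sigma> u u \<tau>] by linarith
  with False show ?thesis by (simp add: Delta_def)
qed

lemma Delta_one_le_one: "Delta lab \<sigma> (\<lambda>_ _. 1) u v \<le> 1"
proof (cases "lab u = lab v")
  case True
  then have "Delta lab \<sigma> (\<lambda>_ _. 1) u v \<le> coupling_cost (pair_pmf (\<sigma> u) (\<sigma> v)) (\<lambda>_ _. 1)"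
    by (rule Delta_le_coupling_cost[OF _ pair_pmf_in_couplings])
  then show ?thesis
    by (simp add: coupling_cost_const)
qed (simp add: Delta_def)

lemma bisim_dist_le_pre_fixed_point:
  assumes "\<And>u v. 0 \<le> d u v" "\<And>u v. d u v \<le> 1" "\<And>u v. Delta lab \<sigma> d u v \<le> d u v"
  shows "bisim_dist lab \<sigma> s t \<le> d s t"
  unfolding bisim_dist_def using assms
  by (intro cInf_lower) (auto simp: bdd_below_def)

lemma bisim_dist_le_one: "bisim_dist lab \<sigma> s t \<le> 1"
  by (rule bisim_dist_le_pre_fixed_point[where d = "\<lambda>_ _. 1", simplified]) (rule Delta_one_le_one)

lemma bisim_dist_pre_fixed_points_nonempty:
  "{d s t | d. (\<forall>u v. 0 \<le> d u v \<and> d u v \<le> 1) \<and> (\<forall>u v. Delta lab \<sigma> d u v \<le> d u v)} \<noteq> {}"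
proof -
  have "(\<lambda>_ _. 1::real) s t \<in> {d s t | d. (\<forall>u v. 0 \<le> d u v \<and> d u v \<le> 1) \<and> (\<forall>u v. Delta lab \<sigma> d u v \<le> d u v)}"
    using Delta_one_le_one[where lab = lab and \<sigma> = \<sigma>] by (intro CollectI exI[of _ "\<lambda>_ _. 1::real"]) simp
  then show ?thesis
    by blast
qed

lemma bisim_dist_nonneg: "0 \<le> bisim_dist lab \<sigma> s t"
  unfolding bisim_dist_def by (rule cInf_greatest[OF bisim_dist_pre_fixed_points_nonempty]) auto

lemma Delta_bisim_dist_le: "Delta lab \<sigma> (bisim_dist lab \<sigma>) s t \<le> bisim_dist lab \<sigma> s t"
  unfolding bisim_dist_def[of lab \<sigma> s t]
proof (rule cInf_greatest[OF bisim_dist_pre_fixed_points_nonempty], clarify)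
  fix d assume d: "\<forall>u v. 0 \<le> d u v \<and> d u v \<le> 1" and pre: "\<forall>u v. Delta lab \<sigma> d u v \<le> d u v"
  have "Delta lab \<sigma> (bisim_dist lab \<sigma>) s t \<le> Delta lab \<sigma> d s t + 0"
    using d pre by (intro Delta_le_plus) (simp_all add: bisim_dist_le_pre_fixed_point)
  also have "\<dots> \<le> d s t"
    using pre by simp
  finally show "Delta lab \<sigma> (bisim_dist lab \<sigma>) s t \<le> d s t" .
qed

lemma liminf_ereal_unit_interval:
  fixes f :: "nat \<Rightarrow> real"
  assumes "\<And>n. 0 \<le> f n" "\<And>n. f n \<le> 1"
  defines "l \<equiv> real_of_ereal (liminf (\<lambda>n. ereal (f n)))"
  shows "ereal l = liminf (\<lambda>n. ereal (f n))" and "0 \<le> l" and "l \<le> 1"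
proof -
  have lower: "0 \<le> liminf (\<lambda>n. ereal (f n))"
    by (rule Liminf_bounded) (simp add: assms)
  have "liminf (\<lambda>n. ereal (f n)) \<le> limsup (\<lambda>n. ereal (f n))"
    by (rule Liminf_le_Limsup) simp
  also have "\<dots> \<le> 1"
    by (rule Limsup_bounded) (simp add: assms)
  finally show "ereal l = liminf (\<lambda>n. ereal (f n))" "0 \<le> l" "l \<le> 1"
    using lower unfolding l_def by (cases "liminf (\<lambda>n. ereal (f n))"; simp)+
qed

lemma pre_fixed_point_liminf:
  fixes lab :: "'a::finite \<Rightarrow> 'l" and ds :: "nat \<Rightarrow> 'a \<Rightarrow> 'a \<Rightarrow> real"
  assumes conv: "(\<lambda>n. dF (\<sigma>s n) \<tau>) \<longlonglongrightarrow> 0"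
    and pre: "\<And>n u v. Delta lab (\<sigma>s n) (ds n) u v \<le> ds n u v"
    and D: "\<And>u v. ereal (D u v) = liminf (\<lambda>n. ereal (ds n u v))"
    and D_bounds: "\<And>u v. 0 \<le> D u v" "\<And>u v. D u v \<le> 1"
  shows "Delta lab \<tau> D u v \<le> D u v"
proof (rule field_le_epsilon)
  fix e :: real assume "0 < e"
  have close: "\<forall>\<^sub>F n in sequentially. \<forall>x y. D x y \<le> ds n x y + e / 2"
  proof (intro eventually_all_finite)
    fix x y
    have "ereal (D x y - e / 2) < liminf (\<lambda>n. ereal (ds n x y))"
      using \<open>0 < e\<close> by (simp flip: D)
    then show "\<forall>\<^sub>F n in sequentially. D x y \<le> ds n x y + e / 2"
      by (rule less_LiminfD[THEN eventually_mono]) simp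
  qed
  have "(\<lambda>n. 2 * real CARD('a) * dF (\<sigma>s n) \<tau>) \<longlonglongrightarrow> 0"
    using tendsto_mult[OF tendsto_const conv, of "2 * real CARD('a)"] by simp
  then have small: "\<forall>\<^sub>F n in sequentially. 2 * real CARD('a) * dF (\<sigma>s n) \<tau> < e / 2"
    by (rule order_tendstoD(2)) (use \<open>0 < e\<close> in simp)
  have "\<forall>\<^sub>F n in sequentially. ereal (Delta lab \<tau> D u v - e) \<le> ereal (ds n u v)"
    using close small
  proof eventually_elim
    case (elim n)
    have "Delta lab \<tau> D u v \<le> Delta lab (\<sigma>s n) D u v + 2 * real CARD('a) * dF (\<sigma>s n) \<tau>"
      by (rule Delta_le_Delta_plus_dF[OF D_bounds])
    also have "Delta lab (\<sigma>s n) D u v \<le> Delta lab (\<sigma>s n) (ds n) u v + e / 2"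
      using elim \<open>0 < e\<close> by (intro Delta_le_plus) simp_all
    finally show ?case
      using elim pre[of n u v] by simp
  qed
  then have "ereal (Delta lab \<tau> D u v - e) \<le> ereal (D u v)"
    unfolding D by (rule Liminf_bounded)
  then show "Delta lab \<tau> D u v \<le> D u v + e"
    by simp
qed

theorem proposition1:
  fixes lab :: "'a::finite \<Rightarrow> 'l" and \<tau> :: "'a \<Rightarrow> 'a pmf"
    and \<tau>s :: "nat \<Rightarrow> 'a \<Rightarrow> 'a pmf" and s t :: 'a
  assumes "(\<lambda>n. dF (\<tau>s n) \<tau>) \<longlonglongrightarrow> 0"
  shows "ereal (bisim_dist lab \<tau> s t) \<le> liminf (\<lambda>n. ereal (bisim_dist lab (\<tau>s n) s t))"
proof -
  define D where "D u v = real_of_ereal (liminf (\<lambda>n. ereal (bisim_dist lab (\<tau>s n) u v)))" for u v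
  note D_props = liminf_ereal_unit_interval[of "\<lambda>n. bisim_dist lab (\<tau>s n) u v" for u v,
      OF bisim_dist_nonneg bisim_dist_le_one, folded D_def]
  have "Delta lab \<tau> D u v \<le> D u v" for u v
    using assms Delta_bisim_dist_le D_props by (rule pre_fixed_point_liminf)
  then have "bisim_dist lab \<tau> s t \<le> D s t"
    using D_props by (intro bisim_dist_le_pre_fixed_point)
  then show ?thesis
    by (simp flip: D_props(1))
qed

end
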